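(* Let $p_1>p_2>\cdots>p_n$ be distinct positive integers. Enumerate the $\binom n2$ pairs $\{i,j\}$ with $p_i>p_j$ as $k=1,\dots,\binom n2$. For pair $k$, set $m_k=(p_i-p_j)/\gcd(p_i,p_j)$ and $A_k=\{0,\frac1{m_k},\dots,\frac{m_k-1}{m_k}\}$. Then the number of distinct sequences in $\{S_c(\mathbf p): c\in[0,1]\}$ equals $$1+\Big|\bigcup_{k=1}^{\binom n2}A_k\Big| \;=\;1+\sum_{k=1}^{\binom n2}(-1)^{k+1}\sum_{1\le i_1<\cdots<i_k\le\binom n2}\gcd(m_{i_1},\dots,m_{i_k}).$$
   Context: Stationary divisor method with cut point $c\in[0,1]$: seats are allocated one at a time. Initially each party $i$ has $a_i=0$ seats; each next seat goes to a party $i$ maximizing $p_i/(a_i+c)$, whose $a_i$ then increases by $1$. Ties are broken in favor of the smallest index. For $c=0$ the convention is that $p_i/0>p_j/0$ whenever $p_i>p_j$, and $p_i/0>p_j/k$ for every $k>0$. $S_c(\mathbf p)$ is the infinite sequence of indices of the parties receiving successive seats. *)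

theory Defs
  imports Complex_Main
begin

text \<open>Parties are indexed 0,...,n-1 (p 0 > p 1 > ... > p (n-1)).
  A seat allocation is a function a :: nat => nat (seats per party).\<close>

definition beats :: "real \<Rightarrow> (nat \<Rightarrow> nat) \<Rightarrow> (nat \<Rightarrow> nat) \<Rightarrow> nat \<Rightarrow> nat \<Rightarrow> bool" where
  "beats c p a i j =
    (if real (a i) + c = 0 \<and> real (a j) + c = 0 then p i > p j
     else if real (a i) + c = 0 then True
     else if real (a j) + c = 0 then False
     else real (p i) / (real (a i) + c) > real (p j) / (real (a j) + c))"

definition winner :: "real \<Rightarrow> (nat \<Rightarrow> nat) \<Rightarrow> nat \<Rightarrow> (nat \<Rightarrow> nat) \<Rightarrow> nat" where
  "winner c p n a = (LEAST i. i < n \<and> (\<forall>j<n. \<not> beats c p a j i))"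

fun alloc :: "real \<Rightarrow> (nat \<Rightarrow> nat) \<Rightarrow> nat \<Rightarrow> nat \<Rightarrow> (nat \<Rightarrow> nat)" where
  "alloc c p n 0 = (\<lambda>_. 0)"
| "alloc c p n (Suc t) =
     (let a = alloc c p n t; w = winner c p n a in a(w := a w + 1))"

text \<open>The seat sequence S_c(p): the t-th entry (t = 0,1,...) is the party receiving seat t+1.\<close>
definition seatseq :: "real \<Rightarrow> (nat \<Rightarrow> nat) \<Rightarrow> nat \<Rightarrow> (nat \<Rightarrow> nat)" where
  "seatseq c p n = (\<lambda>t. winner c p n (alloc c p n t))"

text \<open>Pairs {i,j} with p_i > p_j, represented as (i,j) with i < j < n.\<close>
definition pairs :: "nat \<Rightarrow> (nat \<times> nat) set" where
  "pairs n = {(i, j). i < j \<and> j < n}"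

definition mval :: "(nat \<Rightarrow> nat) \<Rightarrow> nat \<times> nat \<Rightarrow> nat" where
  "mval p ij = (p (fst ij) - p (snd ij)) div gcd (p (fst ij)) (p (snd ij))"

definition Aset :: "nat \<Rightarrow> real set" where
  "Aset m = {real l / real m | l. l < m}"

end

theory Submission
  imports Defs "HOL-Library.Product_Lexorder"
begin

text \<open>
  Give the (x+1)-st seat of party i the priority (x + c) / p_i, ties broken by the index i.
  The stationary divisor method hands out the seats in increasing priority, so S_c = S_c'
  exactly when c and c' order all seats alike. For i < j, the (x+1)-st seat of i precedes the
  (y+1)-st seat of j iff c \<ge> (p_j x - p_i y) / (p_i - p_j); by Bezout, the numbers of this
  form in (0, 1] are exactly the 1 - l / m_k with l < m_k. So the sequences for c \<in> [0, 1]
  correspond to the initial segments of the finite set 1 - \<Union>_k A_k, and there is one more of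
  these than the set has elements. The second equation is inclusion-exclusion, because
  A_m \<inter> A_m' = A_gcd(m, m').
\<close>

section \<open>Fractions with a fixed denominator\<close>

lemma Aset_eq_image: "Aset m = (\<lambda>l. real l / real m) ` {..<m}"
  unfolding Aset_def by auto

lemma finite_Aset [simp]: "finite (Aset m)"
  by (simp add: Aset_eq_image)

lemma card_Aset [simp]: "card (Aset m) = m"
  by (cases "m = 0") (auto simp: Aset_eq_image card_image inj_on_def)

lemma Aset_iff:
  assumes "0 < m"
  shows "x \<in> Aset m \<longleftrightarrow> 0 \<le> x \<and> x < 1 \<and> real m * x \<in> \<int>"
proof
  assume "x \<in> Aset m"
  then show "0 \<le> x \<and> x < 1 \<and> real m * x \<in> \<int>"
    using assms by (auto simp: Aset_def)
next
  assume x: "0 \<le> x \<and> x < 1 \<and> real m * x \<in> \<int>"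
  then obtain k where k: "real m * x = of_int k" by (auto elim: Ints_cases)
  have "0 \<le> real_of_int k" "real_of_int k < real m"
    unfolding k[symmetric] using x assms by (simp_all add: mult_less_cancel_left1)
  then have "0 \<le> k" "k < int m" by linarith+
  moreover have "x = real (nat k) / real m"
    using k \<open>0 \<le> k\<close> assms by (simp add: field_simps)
  ultimately show "x \<in> Aset m"
    unfolding Aset_def by (intro CollectI exI[of _ "nat k"]) auto
qed

lemma Aset_Int_Aset:
  assumes "0 < m" "0 < m'"
  shows "Aset m \<inter> Aset m' = Aset (gcd m m')"
proof -
  have integral_iff: "real m * x \<in> \<int> \<and> real m' * x \<in> \<int> \<longleftrightarrow> real (gcd m m') * x \<in> \<int>" for x
  proof
    obtain u v where "u * int m + v * int m' = int (gcd m m')"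
      using bezout_int[of "int m" "int m'"] by (auto simp: gcd_int_def)
    then have bezout: "of_int u * real m + of_int v * real m' = real (gcd m m')"
      by (metis of_int_add of_int_mult of_int_of_nat_eq)
    have "real (gcd m m') * x = of_int u * (real m * x) + of_int v * (real m' * x)"
      by (simp flip: bezout add: algebra_simps)
    then show "real m * x \<in> \<int> \<and> real m' * x \<in> \<int> \<Longrightarrow> real (gcd m m') * x \<in> \<int>"
      by auto
  next
    assume g: "real (gcd m m') * x \<in> \<int>"
    have "real k * x \<in> \<int>" if "d dvd k" "real d * x \<in> \<int>" for d k :: nat
    proof -
      from \<open>d dvd k\<close> obtain e where "k = d * e" ..
      then have "real k * x = real e * (real d * x)" by simp
      then show ?thesis using that(2) Ints_mult Ints_of_nat by metis
    qed
    with g show "real m * x \<in> \<int> \<and> real m' * x \<in> \<int>" by auto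
  qed
  have "0 < gcd m m'" using assms by simp
  show ?thesis
  proof (rule set_eqI)
    fix x
    have "x \<in> Aset m \<inter> Aset m' \<longleftrightarrow> 0 \<le> x \<and> x < 1 \<and> (real m * x \<in> \<int> \<and> real m' * x \<in> \<int>)"
      using assms by (auto simp: Aset_iff)
    also have "\<dots> \<longleftrightarrow> x \<in> Aset (gcd m m')"
      by (simp only: integral_iff Aset_iff[OF \<open>0 < gcd m m'\<close>])
    finally show "x \<in> Aset m \<inter> Aset m' \<longleftrightarrow> x \<in> Aset (gcd m m')" .
  qed
qed

lemma Inter_Aset_eq_Aset_Gcd:
  assumes "finite M" "M \<noteq> {}" "0 \<notin> M"
  shows "\<Inter> (Aset ` M) = Aset (Gcd M)"
  using assms
proof (induction M rule: finite_ne_induct)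
  case (insert m M)
  then have "Gcd M \<noteq> 0" by (auto simp: Gcd_0_iff)
  with insert.prems have "Aset m \<inter> Aset (Gcd M) = Aset (gcd m (Gcd M))"
    by (intro Aset_Int_Aset) auto
  with insert show ?case by simp
qed simp

lemma int_card_UN_Aset:
  assumes "finite I" "0 \<notin> m ` I"
  shows "int (card (\<Union>k\<in>I. Aset (m k)))
           = (\<Sum>K | K \<subseteq> I \<and> K \<noteq> {}. (-1) ^ (card K + 1) * int (Gcd (m ` K)))"
proof -
  interpret Incl_Excl finite "int o card"
    by unfold_locales (auto simp: card_Un_disjnt)
  have "int (card (\<Union>k\<in>I. Aset (m k)))
          = (\<Sum>K | K \<subseteq> I \<and> K \<noteq> {}. (-1) ^ (card K + 1) * int (card (\<Inter> (Aset ` m ` K))))"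
    using restricted_indexed[of I "\<lambda>k. Aset (m k)"] assms by (simp add: image_comp)
  also have "\<dots> = (\<Sum>K | K \<subseteq> I \<and> K \<noteq> {}. (-1) ^ (card K + 1) * int (Gcd (m ` K)))"
  proof (intro sum.cong refl)
    fix K assume "K \<in> {K. K \<subseteq> I \<and> K \<noteq> {}}"
    then have "\<Inter> (Aset ` m ` K) = Aset (Gcd (m ` K))"
      using assms by (intro Inter_Aset_eq_Aset_Gcd) (auto intro: finite_subset)
    then show "(-1) ^ (card K + 1) * int (card (\<Inter> (Aset ` m ` K)))
                 = (-1) ^ (card K + 1) * int (Gcd (m ` K))" by simp
  qed
  finally show ?thesis .
qed

section \<open>Crossing points of two parties\<close>

lemma nat_lincomb_eq_multiples_gcd:
  fixes a b :: nat
  assumes "0 < a" "0 < b"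
  shows "{int b * int x - int a * int y | x y. True} = {k. int (gcd a b) dvd k}"
proof (intro set_eqI iffI)
  fix k assume "k \<in> {int b * int x - int a * int y | x y. True}"
  then show "k \<in> {k. int (gcd a b) dvd k}"
    by (auto simp flip: gcd_int_int_eq)
next
  fix k assume "k \<in> {k. int (gcd a b) dvd k}"
  then obtain l where k: "k = int (gcd a b) * l" by auto
  obtain x y where xy: "b * x = a * y + gcd a b"
    using bezout_nat[of b a] assms by (auto simp: gcd.commute)
  obtain x' y' where xy': "a * x' = b * y' + gcd a b"
    using bezout_nat[of a b] assms by auto
  show "k \<in> {int b * int x - int a * int y | x y. True}"
  proof (cases "0 \<le> l")
    case True
    have "k = int b * int (nat l * x) - int a * int (nat l * y)"
      using arg_cong[OF xy, of int] True k by (simp add: algebra_simps)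
    then show ?thesis by blast
  next
    case False
    have "k = int b * int (nat (- l) * y') - int a * int (nat (- l) * x')"
      using arg_cong[OF xy', of int] False k by (simp add: algebra_simps)
    then show ?thesis by blast
  qed
qed

text \<open>The c solving (x + c) / a = (y + c) / b.\<close>

definition threshold :: "nat \<Rightarrow> nat \<Rightarrow> nat \<Rightarrow> nat \<Rightarrow> real" where
  "threshold a b x y = (real b * real x - real a * real y) / (real a - real b)"

lemma threshold_range:
  assumes "0 < b" "b < a"
  shows "{threshold a b x y | x y. True} = {t. real ((a - b) div gcd a b) * t \<in> \<int>}"
proof -
  define g where "g = gcd a b"
  define m where "m = (a - b) div g"
  have g: "0 < g" using assms by (simp add: g_def)
  have "g dvd a - b" by (simp add: g_def dvd_diff_nat)
  then have diff: "real a - real b = real g * real m"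
    using assms by (simp add: m_def of_nat_diff flip: of_nat_mult)
  have "0 < real g * real m" using diff assms by simp
  then have m: "0 < m" by (simp add: zero_less_mult_iff)
  have thr: "threshold a b x y = of_int (int b * int x - int a * int y) / (real g * real m)" for x y
    by (simp add: threshold_def diff)
  have "{threshold a b x y | x y. True}
          = (\<lambda>k. of_int k / (real g * real m)) ` {int b * int x - int a * int y | x y. True}"
    unfolding thr by blast
  also have "\<dots> = (\<lambda>k. of_int k / (real g * real m)) ` {k. int g dvd k}"
    using nat_lincomb_eq_multiples_gcd[of a b] assms by (simp add: g_def)
  also have "\<dots> = {t. real m * t \<in> \<int>}"
  proof (intro set_eqI iffI)
    fix t assume "t \<in> (\<lambda>k. of_int k / (real g * real m)) ` {k. int g dvd k}"
    then obtain l where "t = of_int (int g * l) / (real g * real m)" by auto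
    then have "real m * t = of_int l" using g m by simp
    then show "t \<in> {t. real m * t \<in> \<int>}" by simp
  next
    fix t assume "t \<in> {t. real m * t \<in> \<int>}"
    then obtain l where "real m * t = of_int l" by (auto elim: Ints_cases)
    then have "t = of_int (int g * l) / (real g * real m)" using g m by (simp add: field_simps)
    then show "t \<in> (\<lambda>k. of_int k / (real g * real m)) ` {k. int g dvd k}"
      by (intro image_eqI[of _ _ "int g * l"]) auto
  qed
  finally show ?thesis by (simp add: m_def g_def)
qed

lemma image_one_minus_Aset:
  assumes "0 < m"
  shows "(\<lambda>t. 1 - t) ` Aset m = {t. 0 < t \<and> t \<le> 1 \<and> real m * t \<in> \<int>}"
proof -
  have "(\<lambda>t. 1 - t) ` Aset m = {t. 1 - t \<in> Aset m}"
    by (force simp: image_iff)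
  moreover have "real m * (1 - t) \<in> \<int> \<longleftrightarrow> real m * t \<in> \<int>" for t
    using Ints_diff[of "real m" "real m * (1 - t)"] Ints_diff[of "real m" "real m * t"]
    by (auto simp: algebra_simps)
  ultimately show ?thesis
    using assms by (auto simp: Aset_iff)
qed

lemma diff_div_gcd_pos:
  fixes a b :: nat
  assumes "0 < b" "b < a"
  shows "0 < (a - b) div gcd a b"
proof -
  have "gcd a b \<le> a - b"
    using assms by (intro dvd_imp_le) (simp_all add: dvd_diff_nat)
  then show ?thesis
    using assms by (simp add: div_greater_zero_iff)
qed

lemma threshold_range_unit_interval:
  assumes "0 < b" "b < a"
  shows "{threshold a b x y | x y. True} \<inter> {0<..1} = (\<lambda>t. 1 - t) ` Aset ((a - b) div gcd a b)"
  unfolding threshold_range[OF assms] image_one_minus_Aset[OF diff_div_gcd_pos[OF assms]] by auto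

section \<open>Seat sequences\<close>

lemma card_image_eq_if_same_fibres:
  assumes "\<And>x y. x \<in> A \<Longrightarrow> y \<in> A \<Longrightarrow> f x = f y \<longleftrightarrow> g x = g y"
  shows "card (f ` A) = card (g ` A)"
proof -
  define h where "h z = g (inv_into A f z)" for z
  have h: "h (f x) = g x" if "x \<in> A" for x
  proof -
    have "inv_into A f (f x) \<in> A" "f (inv_into A f (f x)) = f x"
      using that by (auto intro: inv_into_into f_inv_into_f)
    then show ?thesis using assms that by (simp add: h_def)
  qed
  have "bij_betw h (f ` A) (g ` A)"
    unfolding bij_betw_def inj_on_def using h assms by (auto simp: image_image)
  then show ?thesis by (rule bij_betw_same_card)
qed

lemma card_initial_segments:
  fixes T :: "'a::linorder set"
  assumes "finite T" "T \<subseteq> {a<..b}" "a \<le> b"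
  shows "card ((\<lambda>c. {t \<in> T. t \<le> c}) ` {a..b}) = Suc (card T)"
proof -
  let ?cut = "\<lambda>c. {t \<in> T. t \<le> c}"
  have "?cut ` {a..b} = insert {} (?cut ` T)"
  proof (intro equalityI subsetI)
    fix S assume "S \<in> ?cut ` {a..b}"
    then obtain c where c: "c \<in> {a..b}" "S = ?cut c" by auto
    show "S \<in> insert {} (?cut ` T)"
    proof (cases "S = {}")
      case False
      have "finite S" using c assms(1) by simp
      then have "Max S \<in> S" using False by simp
      moreover have "S = ?cut (Max S)"
        using c \<open>finite S\<close> \<open>Max S \<in> S\<close> by auto
      ultimately show ?thesis using c by blast
    qed simp
  next
    fix S assume "S \<in> insert {} (?cut ` T)"
    moreover have "?cut a = {}" using assms(2) by force
    ultimately show "S \<in> ?cut ` {a..b}"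
      using assms(2,3) by (force intro: image_eqI)
  qed
  moreover have "inj_on ?cut T"
    by (rule inj_onI) (metis (mono_tags, lifting) mem_Collect_eq order_antisym order_refl)
  moreover have "{} \<notin> ?cut ` T" by auto
  ultimately show ?thesis using assms(1) by (simp add: card_image)
qed

lemma divide_less_divide_swap_iff:
  fixes a b u v :: real
  assumes "0 < a" "0 < b" "0 < u" "0 < v"
  shows "a / u < b / v \<longleftrightarrow> v / b < u / a"
  using assms by (simp add: field_simps)

lemma finite_pairs: "finite (pairs n)"
  by (rule finite_subset[of _ "{..<n} \<times> {..<n}"]) (auto simp: pairs_def)

lemma alloc_Suc_seatseq [simp]:
  "alloc c p n (Suc t) = (alloc c p n t)(seatseq c p n t := alloc c p n t (seatseq c p n t) + 1)"
  by (simp add: seatseq_def Let_def)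

declare alloc.simps(2) [simp del]

locale apportionment =
  fixes p :: "nat \<Rightarrow> nat" and n :: nat
  assumes pos: "i < n \<Longrightarrow> 0 < p i"
    and decr: "i < j \<Longrightarrow> j < n \<Longrightarrow> p j < p i"
begin

text \<open>
  Compared lexicographically, so ties in the first component go to the smaller index. Unlike the
  quotient p_i / (x + c), this needs no convention at c = 0; there the convention of
  \<^const>\<open>beats\<close> agrees with the tie-break by index because p is decreasing.
\<close>

definition priority :: "real \<Rightarrow> nat \<Rightarrow> nat \<Rightarrow> real \<times> nat" where
  "priority c i x = ((real x + c) / real (p i), i)"

lemma priority_less_same_party:
  "i < n \<Longrightarrow> priority c i x < priority c i y \<longleftrightarrow> x < y"
  using pos[of i] by (simp add: priority_def divide_less_cancel)

lemma beats_imp_priority_less: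
  assumes "0 \<le> c" "i < n" "j < n" "beats c p a j i"
  shows "priority c j (a j) < priority c i (a i)"
proof -
  have "j < i" if "p i < p j"
    using that decr[of i j] decr[of j i] assms(2,3) by (cases i j rule: linorder_cases) auto
  then show ?thesis
    using assms pos[of i] pos[of j]
    by (auto simp: beats_def priority_def divide_less_divide_swap_iff split: if_splits)
qed

lemma fst_priority_less_imp_beats:
  assumes "0 \<le> c" "i < n" "j < n" "fst (priority c j (a j)) < fst (priority c i (a i))"
  shows "beats c p a j i"
proof -
  have "0 \<le> (real (a j) + c) / real (p j)" using assms(1) by simp
  then have "0 < (real (a i) + c) / real (p i)"
    using assms(4) by (simp add: priority_def)
  then have "0 < real (a i) + c"
    using pos[OF assms(2)] by (simp add: zero_less_divide_iff)
  then show ?thesis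
    using assms pos[of i] pos[of j] by (auto simp: beats_def priority_def divide_less_divide_swap_iff)
qed

lemma winner_minimal_priority:
  assumes "0 \<le> c" "0 < n"
  shows "winner c p n a < n"
    and "j < n \<Longrightarrow> priority c (winner c p n a) (a (winner c p n a)) \<le> priority c j (a j)"
proof -
  let ?P = "\<lambda>i. priority c i (a i)"
  define w where "w = snd (Min (?P ` {..<n}))"
  have "Min (?P ` {..<n}) \<in> ?P ` {..<n}"
    using assms(2) by (intro Min_in) auto
  then have w: "w < n" "?P w = Min (?P ` {..<n})"
    by (auto simp: w_def priority_def)
  have w_le: "?P w \<le> ?P j" if "j < n" for j
    using that by (simp add: w)
  have "winner c p n a = w"
    unfolding winner_def
  proof (rule Least_equality)
    show "w < n \<and> (\<forall>j<n. \<not> beats c p a j w)"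
    proof (intro conjI allI impI notI)
      fix j assume "j < n" "beats c p a j w"
      then have "?P j < ?P w" by (intro beats_imp_priority_less assms(1) w(1))
      with w_le[OF \<open>j < n\<close>] show False by simp
    qed (rule w(1))
  next
    fix i assume i: "i < n \<and> (\<forall>j<n. \<not> beats c p a j i)"
    show "w \<le> i"
    proof (rule ccontr)
      assume "\<not> w \<le> i"
      then have "fst (?P w) < fst (?P i)"
        using w_le[of i] i by (auto simp: priority_def less_eq_prod_def)
      then show False
        using i w fst_priority_less_imp_beats[OF assms(1)] by blast
    qed
  qed
  then show "winner c p n a < n" "j < n \<Longrightarrow> ?P (winner c p n a) \<le> ?P j"
    using w w_le by auto
qed

lemma seatseq_less:
  "0 \<le> c \<Longrightarrow> 0 < n \<Longrightarrow> seatseq c p n t < n"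
  unfolding seatseq_def by (rule winner_minimal_priority)

lemma sum_alloc:
  assumes "0 \<le> c" "0 < n"
  shows "(\<Sum>k<n. alloc c p n t k) = t"
proof (induction t)
  case (Suc t)
  have "(\<Sum>k<n. alloc c p n (Suc t) k)
          = (\<Sum>k<n. alloc c p n t k + (if k = seatseq c p n t then 1 else 0))"
    by (intro sum.cong) auto
  with Suc.IH seatseq_less[OF assms] show ?case by (simp add: sum.distrib)
qed simp

lemma alloc_precedes:
  assumes "0 \<le> c" "i < n" "j < n" "priority c i x < priority c j y"
  shows "y < alloc c p n t j \<Longrightarrow> x < alloc c p n t i"
proof (induction t)
  case (Suc t)
  let ?a = "alloc c p n t" and ?w = "seatseq c p n t"
  show ?case
  proof (cases "y < ?a j")
    case True
    then show ?thesis using Suc.IH by auto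
  next
    case False
    with Suc.prems have "?w = j" "?a j = y"
      by (auto split: if_splits)
    moreover have "priority c ?w (?a ?w) \<le> priority c i (?a i)"
      unfolding seatseq_def using assms(2) by (intro winner_minimal_priority(2) assms(1)) auto
    ultimately have "priority c j y \<le> priority c i (?a i)" by simp
    with assms(4) have "priority c i x < priority c i (?a i)" by simp
    then have "x < ?a i" using priority_less_same_party[OF assms(2)] by blast
    then show ?thesis by auto
  qed
qed simp

lemma alloc_unbounded:
  assumes "0 \<le> c" "i < n"
  shows "\<exists>t. x < alloc c p n t i"
proof (rule ccontr)
  assume "\<nexists>t. x < alloc c p n t i"
  have "\<exists>y. priority c i x < priority c j y" if "j < n" for j
  proof -
    obtain y where "fst (priority c i x) * real (p j) < real y"
      using reals_Archimedean2 by blast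
    then have "fst (priority c i x) < (real y + c) / real (p j)"
      using pos[OF that] assms(1) by (simp add: pos_less_divide_eq)
    then show ?thesis by (auto simp: priority_def)
  qed
  then obtain y where y: "\<And>j. j < n \<Longrightarrow> priority c i x < priority c j (y j)"
    by metis
  have "alloc c p n t j \<le> y j" if "j < n" for j t
    using alloc_precedes[OF assms(1,2) that y[OF that]] \<open>\<nexists>t. x < alloc c p n t i\<close>
    by (meson not_le)
  then have "(\<Sum>k<n. alloc c p n t k) \<le> (\<Sum>k<n. y k)" for t
    by (intro sum_mono) simp
  moreover have "0 < n" using assms(2) by simp
  ultimately have "t \<le> (\<Sum>k<n. y k)" for t
    using sum_alloc[OF assms(1)] by metis
  from this[of "Suc (\<Sum>k<n. y k)"] show False by simp
qed

lemma winner_eq_if_same_order: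
  assumes "0 \<le> c" "0 \<le> c'"
    and same_order: "\<And>i j x y. i < n \<Longrightarrow> j < n \<Longrightarrow>
                        priority c i x < priority c j y \<longleftrightarrow> priority c' i x < priority c' j y"
  shows "winner c p n a = winner c' p n a"
proof (cases "n = 0")
  case False
  let ?w = "winner c p n a" and ?w' = "winner c' p n a"
  have "priority c ?w (a ?w) \<le> priority c ?w' (a ?w')"
    and "priority c' ?w' (a ?w') \<le> priority c' ?w (a ?w)"
    and "?w < n" "?w' < n"
    using False assms(1,2) winner_minimal_priority by simp_all
  moreover have "priority d i x \<noteq> priority d' j y" if "i \<noteq> j" for d d' i j x y
    using that by (simp add: priority_def)
  ultimately show ?thesis
    using same_order by (metis order.strict_iff_order order.asym)
qed (simp add: winner_def)

lemma seatseq_eq_if_same_order: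
  assumes "0 \<le> c" "0 \<le> c'"
    and "\<And>i j x y. i < n \<Longrightarrow> j < n \<Longrightarrow>
           priority c i x < priority c j y \<longleftrightarrow> priority c' i x < priority c' j y"
  shows "seatseq c p n = seatseq c' p n"
proof -
  note winner_eq = winner_eq_if_same_order[OF assms]
  have "alloc c p n t = alloc c' p n t" for t
    by (induction t) (simp_all add: seatseq_def winner_eq)
  then show ?thesis by (simp add: seatseq_def winner_eq)
qed

lemma seatseq_neq_if_order_differs:
  assumes "0 \<le> c" "0 \<le> c'" "i < n" "j < n"
    and "priority c i x < priority c j y" "priority c' j y < priority c' i x"
  shows "seatseq c p n \<noteq> seatseq c' p n"
proof
  assume "seatseq c p n = seatseq c' p n"
  then have "alloc c p n t = alloc c' p n t" for t
    by (induction t) simp_all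
  txt \<open>So party i passes x seats at the same step as party j passes y; but every step gives a
    seat to a single party.\<close>
  then have exceeds_iff: "x < alloc c p n t i \<longleftrightarrow> y < alloc c p n t j" for t
    using alloc_precedes[OF assms(1,3,4,5)] alloc_precedes[OF assms(2,4,3,6)] by metis
  have "i \<noteq> j"
    using assms(5,6) priority_less_same_party[OF assms(3)] by auto
  obtain t where "x < alloc c p n t i"
    using alloc_unbounded[OF assms(1,3)] ..
  then obtain t1 where "\<not> x < alloc c p n t1 i" "x < alloc c p n (Suc t1) i"
    using ex_least_nat_less[of "\<lambda>t. x < alloc c p n t i"] by auto
  with exceeds_iff[of t1] exceeds_iff[of "Suc t1"] \<open>i \<noteq> j\<close> show False
    by (auto split: if_splits)
qed

lemma priority_less_iff_threshold:
  assumes "i < j" "j < n"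
  shows "priority c i x < priority c j y \<longleftrightarrow> threshold (p i) (p j) x y \<le> c"
proof -
  have pj: "0 < p j" and pij: "p j < p i" using assms pos decr by auto
  have "priority c i x < priority c j y \<longleftrightarrow> (real x + c) / real (p i) \<le> (real y + c) / real (p j)"
    using assms(1) by (auto simp: priority_def)
  also have "\<dots> \<longleftrightarrow> (real x + c) * real (p j) \<le> (real y + c) * real (p i)"
    using pj pij by (simp add: divide_le_eq le_divide_eq field_simps)
  also have "\<dots> \<longleftrightarrow> real (p j) * real x - real (p i) * real y \<le> c * (real (p i) - real (p j))"
    by (simp add: algebra_simps)
  also have "\<dots> \<longleftrightarrow> threshold (p i) (p j) x y \<le> c"
    using pij by (simp add: threshold_def divide_le_eq)
  finally show ?thesis .
qed

lemma priority_less_iff_not_less: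
  "i \<noteq> j \<Longrightarrow> priority c i x < priority c j y \<longleftrightarrow> \<not> priority c j y < priority c i x"
  by (auto simp: priority_def)

lemma seatseq_eq_iff_same_side_of_thresholds:
  assumes "0 \<le> c" "0 \<le> c'"
  shows "seatseq c p n = seatseq c' p n \<longleftrightarrow>
           (\<forall>i j x y. i < j \<longrightarrow> j < n \<longrightarrow>
              (threshold (p i) (p j) x y \<le> c \<longleftrightarrow> threshold (p i) (p j) x y \<le> c'))"
    (is "_ \<longleftrightarrow> (\<forall>i j x y. ?same i j x y)")
proof
  have "seatseq d p n \<noteq> seatseq d' p n"
    if "0 \<le> d" "0 \<le> d'" "i < j" "j < n"
      "threshold (p i) (p j) x y \<le> d" "\<not> threshold (p i) (p j) x y \<le> d'" for d d' i j x y
  proof (rule seatseq_neq_if_order_differs[of d d' i j x y])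
    show "priority d i x < priority d j y"
      using that by (simp add: priority_less_iff_threshold)
    show "priority d' j y < priority d' i x"
      using that priority_less_iff_not_less[of i j d' x y] by (simp add: priority_less_iff_threshold)
  qed (use that in auto)
  then show "seatseq c p n = seatseq c' p n \<Longrightarrow> \<forall>i j x y. ?same i j x y"
    using assms by metis
next
  assume same: "\<forall>i j x y. ?same i j x y"
  show "seatseq c p n = seatseq c' p n"
  proof (rule seatseq_eq_if_same_order[OF assms])
    fix i j x y assume "i < n" "j < n"
    then consider "i < j" | "j < i" | "i = j" by linarith
    then show "priority c i x < priority c j y \<longleftrightarrow> priority c' i x < priority c' j y"
    proof cases
      case 1
      with same \<open>j < n\<close> show ?thesis by (simp add: priority_less_iff_threshold)
    next
      case 2
      with same \<open>i < n\<close> show ?thesis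
        by (simp add: priority_less_iff_not_less[of i j] priority_less_iff_threshold)
    next
      case 3
      with \<open>i < n\<close> show ?thesis by (simp add: priority_less_same_party)
    qed
  qed
qed

lemma mval_pos: "k \<in> pairs n \<Longrightarrow> 0 < mval p k"
  using pos decr diff_div_gcd_pos by (auto simp: pairs_def mval_def)

definition thresholds :: "real set" where
  "thresholds = {threshold (p i) (p j) x y | i j x y. i < j \<and> j < n} \<inter> {0<..1}"

lemma thresholds_eq_reflected_union:
  "thresholds = (\<lambda>t. 1 - t) ` (\<Union>k\<in>pairs n. Aset (mval p k))"
proof -
  have "thresholds = (\<Union>(i, j)\<in>pairs n. {threshold (p i) (p j) x y | x y. True} \<inter> {0<..1})"
    unfolding thresholds_def pairs_def by blast
  also have "\<dots> = (\<Union>(i, j)\<in>pairs n. (\<lambda>t. 1 - t) ` Aset (mval p (i, j)))"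
  proof (intro SUP_cong refl)
    fix k assume "k \<in> pairs n"
    then obtain i j where "k = (i, j)" "i < j" "j < n" by (auto simp: pairs_def)
    then show "(case k of (i, j) \<Rightarrow> {threshold (p i) (p j) x y | x y. True} \<inter> {0<..1})
                 = (case k of (i, j) \<Rightarrow> (\<lambda>t. 1 - t) ` Aset (mval p (i, j)))"
      using threshold_range_unit_interval[of "p j" "p i"] pos decr by (simp add: mval_def)
  qed
  finally show ?thesis by (auto simp: image_UN)
qed

lemma seatseq_eq_iff_same_thresholds_below:
  assumes "c \<in> {0..1}" "c' \<in> {0..1}"
  shows "seatseq c p n = seatseq c' p n \<longleftrightarrow> {t \<in> thresholds. t \<le> c} = {t \<in> thresholds. t \<le> c'}"
proof -
  have "(\<forall>i j x y. i < j \<longrightarrow> j < n \<longrightarrow>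
            (threshold (p i) (p j) x y \<le> c \<longleftrightarrow> threshold (p i) (p j) x y \<le> c'))
          \<longleftrightarrow> (\<forall>t \<in> thresholds. t \<le> c \<longleftrightarrow> t \<le> c')" (is "?all \<longleftrightarrow> ?cut")
  proof
    assume ?all
    then show ?cut by (auto simp: thresholds_def)
  next
    assume ?cut
    show ?all
    proof (intro allI impI)
      fix i j x y assume "i < j" "j < n"
      then consider "threshold (p i) (p j) x y \<le> 0" | "1 < threshold (p i) (p j) x y"
        | "threshold (p i) (p j) x y \<in> thresholds"
        by (force simp: thresholds_def)
      then show "threshold (p i) (p j) x y \<le> c \<longleftrightarrow> threshold (p i) (p j) x y \<le> c'"
        by cases (use assms \<open>?cut\<close> in auto)
    qed
  qed
  moreover have "?cut \<longleftrightarrow> {t \<in> thresholds. t \<le> c} = {t \<in> thresholds. t \<le> c'}"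
    by blast
  ultimately show ?thesis
    using assms by (simp add: seatseq_eq_iff_same_side_of_thresholds)
qed

lemma card_seatseqs:
  "card {seatseq c p n | c. c \<in> {0..1}} = 1 + card (\<Union>k\<in>pairs n. Aset (mval p k))"
proof -
  have "finite thresholds"
    using finite_pairs by (simp add: thresholds_eq_reflected_union)
  have "card {seatseq c p n | c. c \<in> {0..1}} = card ((\<lambda>c. seatseq c p n) ` {0..1})"
    by (simp only: Setcompr_eq_image)
  also have "\<dots> = card ((\<lambda>c. {t \<in> thresholds. t \<le> c}) ` {0..1})"
    by (intro card_image_eq_if_same_fibres seatseq_eq_iff_same_thresholds_below)
  also have "\<dots> = 1 + card thresholds"
    using card_initial_segments[OF \<open>finite thresholds\<close>, of 0 1] by (auto simp: thresholds_def)
  also have "\<dots> = 1 + card (\<Union>k\<in>pairs n. Aset (mval p k))"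
    by (simp add: thresholds_eq_reflected_union card_image inj_on_def)
  finally show ?thesis .
qed

end

theorem mainTheorem18:
  fixes p :: "nat \<Rightarrow> nat" and n :: nat
  assumes pos: "\<And>i. i < n \<Longrightarrow> p i > 0"
    and decr: "\<And>i j. i < j \<Longrightarrow> j < n \<Longrightarrow> p j < p i"
  shows "card {seatseq c p n | c. c \<in> {0..1}}
           = 1 + card (\<Union>k \<in> pairs n. Aset (mval p k))
         \<and> int (1 + card (\<Union>k \<in> pairs n. Aset (mval p k)))
           = 1 + (\<Sum>K \<in> {K. K \<subseteq> pairs n \<and> K \<noteq> {}}.
                    (-1) ^ (card K + 1) * int (Gcd (mval p ` K)))"
proof -
  interpret apportionment p n
    using pos decr by unfold_locales
  have "0 \<notin> mval p ` pairs n"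
    using mval_pos by fastforce
  then have "int (card (\<Union>k \<in> pairs n. Aset (mval p k)))
      = (\<Sum>K \<in> {K. K \<subseteq> pairs n \<and> K \<noteq> {}}. (-1) ^ (card K + 1) * int (Gcd (mval p ` K)))"
    by (rule int_card_UN_Aset[OF finite_pairs])
  then show ?thesis
    using card_seatseqs by simp
qed

end
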